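(* Let $G=(V,E)$ be a finite simple graph of order $n$. For each collection $\mathcal{F}$ of pairwise disjoint forts of $G$, there is a feasible solution $(x,z)$ of the Fort Number Model $\mathrm{FN}(G)$ such that $|\mathcal{F}|=\sum_{i=1}^n z_i$.
   Context: $N(u)$ denotes the neighborhood of $u$. A fort of $G$ is a non-empty set $F\subseteq V$ such that no vertex $u\in V\setminus F$ has exactly one neighbor in $F$. The Fort Number Model $\mathrm{FN}(G)$ has binary variables $x_{iv}$ ($i\in\{1,\dots,n\}$, $v\in V$) and $z_i$ ($i\in\{1,\dots,n\}$), with constraints: $z_i-\sum_{u\in V}x_{iu}\leq0$ for all $i$; $x_{iu}-x_{iv}+\sum_{w\in N(u)\setminus\{v\}}x_{iw}\geq0$ for all $i$, all $v\in V$ and all $u\in N(v)$; $\sum_{i=1}^n x_{iu}\leq1$ for all $u\in V$. A feasible solution is one satisfying all constraints. *)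

theory Defs
  imports Main
begin

definition simple_graph :: "'a set \<Rightarrow> ('a \<Rightarrow> 'a \<Rightarrow> bool) \<Rightarrow> bool" where
  "simple_graph V E \<longleftrightarrow> finite V \<and> (\<forall>u v. E u v \<longrightarrow> u \<in> V \<and> v \<in> V)
     \<and> (\<forall>u. \<not> E u u) \<and> (\<forall>u v. E u v \<longrightarrow> E v u)"

definition nbhd :: "'a set \<Rightarrow> ('a \<Rightarrow> 'a \<Rightarrow> bool) \<Rightarrow> 'a \<Rightarrow> 'a set" where
  "nbhd V E u = {w \<in> V. E u w}"

definition is_fort :: "'a set \<Rightarrow> ('a \<Rightarrow> 'a \<Rightarrow> bool) \<Rightarrow> 'a set \<Rightarrow> bool" where
  "is_fort V E F \<longleftrightarrow> F \<noteq> {} \<and> F \<subseteq> V \<and>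
     (\<forall>u \<in> V - F. card (nbhd V E u \<inter> F) \<noteq> 1)"

definition FN_feasible :: "'a set \<Rightarrow> ('a \<Rightarrow> 'a \<Rightarrow> bool) \<Rightarrow> (nat \<Rightarrow> 'a \<Rightarrow> int) \<Rightarrow> (nat \<Rightarrow> int) \<Rightarrow> bool" where
  "FN_feasible V E x z \<longleftrightarrow>
     (\<forall>i \<in> {1..card V}. \<forall>v \<in> V. x i v \<in> {0, 1}) \<and>
     (\<forall>i \<in> {1..card V}. z i \<in> {0, 1}) \<and>
     (\<forall>i \<in> {1..card V}. z i - (\<Sum>u\<in>V. x i u) \<le> 0) \<and>
     (\<forall>i \<in> {1..card V}. \<forall>v \<in> V. \<forall>u \<in> nbhd V E v.
        x i u - x i v + (\<Sum>w \<in> nbhd V E u - {v}. x i w) \<ge> 0) \<and>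
     (\<forall>u \<in> V. (\<Sum>i = 1..card V. x i u) \<le> 1)"

end

theory Submission
  imports Defs
begin

text \<open>Number the forts 1, ..., k, where k \<le> n because they are non-empty and pairwise
  disjoint subsets of V; let x i be the indicator vector of the i-th fort, z i = 1 for i \<le> k,
  and leave the indices beyond k empty. Disjointness gives the packing constraint. The neighbour
  constraint only bites when v lies in the fort and its neighbour u does not; then u, having the
  neighbour v in the fort, must have a second one there, which pays for x i v.\<close>

lemma card_disjoint_family_le:
  assumes "finite V" and "pairwise disjnt \<F>" and "\<And>F. F \<in> \<F> \<Longrightarrow> F \<noteq> {} \<and> F \<subseteq> V"
  shows "card \<F> \<le> card V"
proof -
  have fin_members: "finite F" if "F \<in> \<F>" for F
    using assms(1,3) that finite_subset by blast
  have "card \<F> = (\<Sum>F\<in>\<F>. 1)" by simp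
  also have "\<dots> \<le> (\<Sum>F\<in>\<F>. card F)"
    using fin_members assms(3) by (intro sum_mono) (simp add: Suc_leI card_gt_0_iff)
  also have "\<dots> = card (\<Union>\<F>)"
    using assms(2) fin_members by (simp add: card_Union_disjoint)
  also have "\<dots> \<le> card V"
    using assms(1,3) by (intro card_mono) auto
  finally show ?thesis .
qed

lemma fort_second_neighbour:
  assumes "is_fort V E F" and "finite V" and "u \<in> V - F" and "v \<in> nbhd V E u \<inter> F"
  shows "(nbhd V E u - {v}) \<inter> F \<noteq> {}"
proof
  assume "(nbhd V E u - {v}) \<inter> F = {}"
  then have "nbhd V E u \<inter> F = {v}" using assms(4) by blast
  then have "card (nbhd V E u \<inter> F) = 1" by simp
  with assms(1,3) show False unfolding is_fort_def by blast
qed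

lemma fort_indicator_neighbour_constraint:
  assumes "simple_graph V E" and "F = {} \<or> is_fort V E F" and "u \<in> nbhd V E v"
  shows "of_bool (u \<in> F) - of_bool (v \<in> F) + (\<Sum>w \<in> nbhd V E u - {v}. of_bool (w \<in> F)) \<ge> (0::int)"
proof (cases "v \<in> F \<and> u \<notin> F")
  case True
  have finV: "finite V" using assms(1) unfolding simple_graph_def by blast
  have "u \<in> V" and "v \<in> nbhd V E u"
    using assms(1,3) unfolding simple_graph_def nbhd_def by auto
  moreover have "is_fort V E F" using assms(2) True by blast
  ultimately have "(nbhd V E u - {v}) \<inter> F \<noteq> {}"
    using fort_second_neighbour[of V E F u v] finV True by blast
  moreover have fin: "finite (nbhd V E u - {v})" using finV unfolding nbhd_def by simp
  ultimately have "card ((nbhd V E u - {v}) \<inter> F) > 0"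
    using card_gt_0_iff finite_Int by blast
  moreover have "(\<Sum>w \<in> nbhd V E u - {v}. of_bool (w \<in> F)) = int (card ((nbhd V E u - {v}) \<inter> F))"
    using fin by (simp only: sum_of_bool_eq Collect_mem_eq)
  ultimately show ?thesis using True by simp
next
  case False
  then have "of_bool (u \<in> F) - of_bool (v \<in> F) \<ge> (0::int)" by auto
  moreover have "(\<Sum>w \<in> nbhd V E u - {v}. of_bool (w \<in> F)) \<ge> (0::int)"
    by (rule sum_nonneg) simp
  ultimately show ?thesis by linarith
qed

lemma FN_feasible_fort_indicators:
  assumes "simple_graph V E"
    and "\<And>i. i \<in> {1..card V} \<Longrightarrow> S i = {} \<or> is_fort V E (S i)"
    and "\<And>i j. i \<in> {1..card V} \<Longrightarrow> j \<in> {1..card V} \<Longrightarrow> i \<noteq> j \<Longrightarrow> S i \<inter> S j = {}"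
  shows "FN_feasible V E (\<lambda>i v. of_bool (v \<in> S i)) (\<lambda>i. of_bool (S i \<noteq> {}))"
  unfolding FN_feasible_def
proof (intro conjI ballI)
  have finV: "finite V" using assms(1) unfolding simple_graph_def by blast
  fix i assume i: "i \<in> {1..card V}"
  show "of_bool (S i \<noteq> {}) - (\<Sum>u\<in>V. of_bool (u \<in> S i)) \<le> (0::int)"
  proof (cases "S i = {}")
    case False
    then have "V \<inter> S i \<noteq> {}" using assms(2)[OF i] unfolding is_fort_def by blast
    then have "card (V \<inter> S i) > 0" using finV card_gt_0_iff by blast
    moreover have "(\<Sum>u\<in>V. of_bool (u \<in> S i)) = int (card (V \<inter> S i))"
      using finV by (simp only: sum_of_bool_eq Collect_mem_eq)
    ultimately show ?thesis using False by simp
  qed simp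
next
  fix i v u assume "i \<in> {1..card V}" and "u \<in> nbhd V E v"
  then show "of_bool (u \<in> S i) - of_bool (v \<in> S i)
      + (\<Sum>w \<in> nbhd V E u - {v}. of_bool (w \<in> S i)) \<ge> (0::int)"
    by (intro fort_indicator_neighbour_constraint assms(1,2))
next
  fix u
  have "\<forall>i \<in> {1..card V} \<inter> {i. u \<in> S i}. \<forall>j \<in> {1..card V} \<inter> {i. u \<in> S i}. i = j"
    using assms(3) by blast
  then have "card ({1..card V} \<inter> {i. u \<in> S i}) \<le> 1"
    by (simp add: card_le_Suc0_iff_eq)
  then show "(\<Sum>i = 1..card V. of_bool (u \<in> S i)) \<le> (1::int)" by simp
qed auto

theorem theorem7p2:
  fixes V :: "'a set" and E :: "'a \<Rightarrow> 'a \<Rightarrow> bool" and \<F> :: "'a set set"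
  assumes "simple_graph V E"
    and "\<forall>F \<in> \<F>. is_fort V E F"
    and "\<forall>F \<in> \<F>. \<forall>F' \<in> \<F>. F \<noteq> F' \<longrightarrow> F \<inter> F' = {}"
  shows "\<exists>x z. FN_feasible V E x z \<and> int (card \<F>) = (\<Sum>i = 1..card V. z i)"
proof -
  have finV: "finite V" using assms(1) unfolding simple_graph_def by blast
  have members: "F \<noteq> {} \<and> F \<subseteq> V" if "F \<in> \<F>" for F
    using assms(2) that unfolding is_fort_def by blast
  have "pairwise disjnt \<F>" using assms(3) unfolding pairwise_def disjnt_def by blast
  then have k_le: "card \<F> \<le> card V" using card_disjoint_family_le finV members by blast
  have "finite \<F>" using finV members by (meson PowI finite_Pow_iff finite_subset subsetI)
  then obtain h where h: "bij_betw h {1..card \<F>} \<F>" using ex_bij_betw_nat_finite_1 by blast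
  define S where "S i = (if i \<in> {1..card \<F>} then h i else {})" for i
  have S_fort: "S i = {} \<or> is_fort V E (S i)" for i
    using h assms(2) unfolding S_def by (auto dest: bij_betwE)
  have S_disjoint: "S i \<inter> S j = {}" if "i \<noteq> j" for i j
  proof (cases "i \<in> {1..card \<F>} \<and> j \<in> {1..card \<F>}")
    case True
    then have "h i \<noteq> h j" using h that unfolding bij_betw_def inj_on_def by blast
    moreover have "h i \<in> \<F>" "h j \<in> \<F>" using h True by (auto dest: bij_betwE)
    ultimately show ?thesis using True assms(3) unfolding S_def by simp
  qed (auto simp: S_def)
  have "{1..card V} \<inter> {i. S i \<noteq> {}} = {1..card \<F>}"
    using h k_le members unfolding S_def by (auto dest: bij_betwE)
  then have count: "int (card \<F>) = (\<Sum>i = 1..card V. of_bool (S i \<noteq> {}))" by simp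
  have "FN_feasible V E (\<lambda>i v. of_bool (v \<in> S i)) (\<lambda>i. of_bool (S i \<noteq> {}))"
    using assms(1) S_fort S_disjoint by (rule FN_feasible_fort_indicators[where S = S])
  with count show ?thesis by blast
qed

end
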